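(* Assume $\mathsf G$ is semisimple and let $\mathfrak k$ be a toral $\mathsf H$-subalgebra of $\mathfrak g$. Then the map $\mathfrak k\to\mathfrak{gl}(\mathfrak m_{\mathfrak k}^\perp)$, $X\mapsto\mathrm{ad}(X)|_{\mathfrak m_{\mathfrak k}^\perp}$, is injective.
   Context: $\mathsf G$ compact Lie group, $\mathsf H\subset\mathsf G$ closed, $\mathsf G/\mathsf H$ compact, connected and almost effective. $Q$ is an $\mathrm{Ad}(\mathsf G)$-invariant inner product on $\mathfrak g$ and $\mathfrak m$ the $Q$-orthogonal complement of $\mathfrak h$. An $\mathsf H$-subalgebra is an $\mathrm{Ad}(\mathsf H)$-invariant Lie subalgebra $\mathfrak k$ with $\mathfrak h\subsetneq\mathfrak k\subsetneq\mathfrak g$; it is toral if $[\mathfrak k,\mathfrak k]\subset\mathfrak h$. For such $\mathfrak k$, $\mathfrak m_{\mathfrak k}=\mathfrak k\cap\mathfrak m$ (the $Q$-orthogonal complement of $\mathfrak h$ in $\mathfrak k$) and $\mathfrak m_{\mathfrak k}^\perp$ is the $Q$-orthogonal complement of $\mathfrak m_{\mathfrak k}$ in $\mathfrak m$; one has $[\mathfrak k,\mathfrak m_{\mathfrak k}^\perp]\subset\mathfrak m_{\mathfrak k}^\perp$. *)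

theory Defs
  imports "HOL-Analysis.Analysis"
begin

text \<open>A finite-dimensional real Lie algebra g is modelled as a Euclidean space type 'g
  with a Lie bracket br.  The inner product of the type plays the role of the
  Ad(G)-invariant inner product Q.\<close>

definition lie_bracket :: "('g::real_vector \<Rightarrow> 'g \<Rightarrow> 'g) \<Rightarrow> bool" where
  "lie_bracket br \<longleftrightarrow> bilinear br \<and> (\<forall>x. br x x = 0) \<and>
     (\<forall>x y z. br x (br y z) + br y (br z x) + br z (br x y) = 0)"

definition lie_subalgebra :: "('g::real_vector \<Rightarrow> 'g \<Rightarrow> 'g) \<Rightarrow> 'g set \<Rightarrow> bool" where
  "lie_subalgebra br S \<longleftrightarrow> subspace S \<and> (\<forall>x\<in>S. \<forall>y\<in>S. br x y \<in> S)"

definition lie_ideal :: "('g::real_vector \<Rightarrow> 'g \<Rightarrow> 'g) \<Rightarrow> 'g set \<Rightarrow> bool" where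
  "lie_ideal br I \<longleftrightarrow> subspace I \<and> (\<forall>x. \<forall>y\<in>I. br x y \<in> I)"

definition semisimple_lie :: "('g::real_vector \<Rightarrow> 'g \<Rightarrow> 'g) \<Rightarrow> bool" where
  "semisimple_lie br \<longleftrightarrow>
     (\<forall>I. lie_ideal br I \<and> (\<forall>x\<in>I. \<forall>y\<in>I. br x y = 0) \<longrightarrow> I = {0})"

text \<open>Ad-invariance of the inner product (infinitesimal form): ad X is skew.\<close>
definition ad_invariant_inner :: "('g::real_inner \<Rightarrow> 'g \<Rightarrow> 'g) \<Rightarrow> bool" where
  "ad_invariant_inner br \<longleftrightarrow> (\<forall>x y z. inner (br x y) z = - inner y (br x z))"

text \<open>Almost effectiveness of G/H on the Lie algebra level: h contains no nonzero ideal of g.\<close>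
definition almost_effective_lie :: "('g::real_vector \<Rightarrow> 'g \<Rightarrow> 'g) \<Rightarrow> 'g set \<Rightarrow> bool" where
  "almost_effective_lie br h \<longleftrightarrow> (\<forall>I. lie_ideal br I \<and> I \<subseteq> h \<longrightarrow> I = {0})"

definition adjoint_group :: "('g::real_inner \<Rightarrow> 'g \<Rightarrow> 'g) \<Rightarrow> 'g set \<Rightarrow> ('g \<Rightarrow> 'g) set \<Rightarrow> bool" where
  "adjoint_group br h AdH \<longleftrightarrow> id \<in> AdH \<and>
     (\<forall>\<phi>\<in>AdH. \<forall>\<psi>\<in>AdH. \<phi> \<circ> \<psi> \<in> AdH) \<and>
     (\<forall>\<phi>\<in>AdH. bij \<phi> \<and> inv \<phi> \<in> AdH \<and> linear \<phi> \<and>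
        (\<forall>x y. \<phi> (br x y) = br (\<phi> x) (\<phi> y)) \<and>
        (\<forall>x y. inner (\<phi> x) (\<phi> y) = inner x y) \<and> \<phi> ` h = h)"

definition H_subalgebra :: "('g::real_inner \<Rightarrow> 'g \<Rightarrow> 'g) \<Rightarrow> 'g set \<Rightarrow> ('g \<Rightarrow> 'g) set \<Rightarrow> 'g set \<Rightarrow> bool" where
  "H_subalgebra br h AdH k \<longleftrightarrow> lie_subalgebra br k \<and> (\<forall>\<phi>\<in>AdH. \<phi> ` k \<subseteq> k) \<and>
     h \<subset> k \<and> k \<subset> UNIV"

definition toral :: "('g::real_vector \<Rightarrow> 'g \<Rightarrow> 'g) \<Rightarrow> 'g set \<Rightarrow> 'g set \<Rightarrow> bool" where
  "toral br h k \<longleftrightarrow> (\<forall>x\<in>k. \<forall>y\<in>k. br x y \<in> h)"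

definition orth_in :: "'g::real_inner set \<Rightarrow> 'g set \<Rightarrow> 'g set" where
  "orth_in V S = {v\<in>V. \<forall>s\<in>S. inner s v = 0}"

end

theory Submission
  imports Defs
begin

text \<open>
  Let \<open>Y \<in> k\<close> act trivially on the complement of \<open>m\<^sub>k\<close> in \<open>m\<close>. For \<open>a \<in> m\<^sub>k\<close>, torality puts
  \<open>[Y, a]\<close> into \<open>h\<close>, while ad-invariance of \<open>Q\<close> makes \<open>[Y, a]\<close> orthogonal to \<open>[Y, h] \<subseteq> h\<close>;
  hence \<open>ad Y\<close> vanishes on all of \<open>m\<close>. Almost effectiveness forces \<open>m\<close> to generate \<open>g\<close>:
  the subalgebra generated by \<open>m\<close> is an ideal, and its orthogonal complement is an ideal
  contained in \<open>h\<close>. So \<open>Y\<close> is central, and by semisimplicity \<open>Y = 0\<close>.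
\<close>

lemma orth_in_UNIV: "orth_in UNIV S = orthogonal_comp S"
  by (auto simp: orth_in_def orthogonal_comp_def orthogonal_def)

lemma orthogonal_comp_inner_eq_0:
  assumes "x \<in> orthogonal_comp S" and "s \<in> S"
  shows "inner s x = 0"
  using assms by (auto simp: orthogonal_comp_def orthogonal_def)

lemma lie_bracket_bilinear: "lie_bracket br \<Longrightarrow> bilinear br"
  by (simp add: lie_bracket_def)

lemma lie_bracket_antisym:
  assumes "lie_bracket br"
  shows "br x y = - br y x"
proof -
  have bil: "bilinear br" and alt: "\<And>x. br x x = 0"
    using assms by (auto simp: lie_bracket_def)
  have "0 = br (x + y) (x + y)" using alt by simp
  also have "\<dots> = br x y + br y x"
    using alt[of x] alt[of y] by (simp add: bilinear_ladd[OF bil] bilinear_radd[OF bil])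
  finally show ?thesis by (simp add: eq_neg_iff_add_eq_0)
qed

lemma lie_bracket_derivation:
  assumes "lie_bracket br"
  shows "br x (br a b) = br a (br x b) + br (br x a) b"
proof -
  have bil: "bilinear br" and jac: "br x (br a b) + br a (br b x) + br b (br x a) = 0"
    using assms by (auto simp: lie_bracket_def)
  have "br a (br b x) = - br a (br x b)"
    using lie_bracket_antisym[OF assms, of b x] by (simp add: bilinear_rneg[OF bil])
  moreover have "br b (br x a) = - br (br x a) b"
    by (rule lie_bracket_antisym[OF assms])
  ultimately have "br x (br a b) + - br a (br x b) + - br (br x a) b = 0"
    using jac by simp
  then show ?thesis by (simp add: algebra_simps eq_diff_eq)
qed

lemma lie_subalgebra_centralizer:
  assumes "lie_bracket br"
  shows "lie_subalgebra br {z. br Y z = 0}"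
proof -
  have bil: "bilinear br" using assms by (rule lie_bracket_bilinear)
  show ?thesis
    unfolding lie_subalgebra_def subspace_def
    using lie_bracket_derivation[OF assms, of Y]
    by (auto simp: bilinear_rzero[OF bil] bilinear_lzero[OF bil]
        bilinear_radd[OF bil] bilinear_rmul[OF bil])
qed

lemma semisimple_lie_center_trivial:
  assumes "lie_bracket br" and "semisimple_lie br" and central: "\<And>z. br Y z = 0"
  shows "Y = 0"
proof -
  have bil: "bilinear br" using assms(1) by (rule lie_bracket_bilinear)
  have central': "br z Y = 0" for z
    using lie_bracket_antisym[OF assms(1), of z Y] central by simp
  have "lie_ideal br (span {Y})"
    unfolding lie_ideal_def
  proof (intro conjI allI ballI subspace_span)
    fix x y assume "y \<in> span {Y}"
    then show "br x y \<in> span {Y}"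
      by (auto simp: span_singleton bilinear_rmul[OF bil] central' intro: range_eqI[of _ _ 0])
  qed
  moreover have "\<forall>x\<in>span {Y}. \<forall>y\<in>span {Y}. br x y = 0"
    by (auto simp: span_singleton bilinear_lmul[OF bil] central)
  ultimately have "span {Y} = {0}"
    using assms(2) by (auto simp: semisimple_lie_def)
  then show ?thesis by (metis span_base singletonD singletonI)
qed

definition lie_generated :: "('g::real_vector \<Rightarrow> 'g \<Rightarrow> 'g) \<Rightarrow> 'g set \<Rightarrow> 'g set" where
  "lie_generated br S = \<Inter>{A. lie_subalgebra br A \<and> S \<subseteq> A}"

lemma lie_subalgebra_lie_generated: "lie_subalgebra br (lie_generated br S)"
  unfolding lie_subalgebra_def
proof
  show "subspace (lie_generated br S)"
    unfolding lie_generated_def by (rule subspace_Inter) (simp add: lie_subalgebra_def)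
  show "\<forall>x\<in>lie_generated br S. \<forall>y\<in>lie_generated br S. br x y \<in> lie_generated br S"
    by (simp add: lie_generated_def lie_subalgebra_def)
qed

lemma lie_generated_subset: "S \<subseteq> lie_generated br S"
  by (auto simp: lie_generated_def)

lemma lie_generated_minimal:
  "lie_subalgebra br A \<Longrightarrow> S \<subseteq> A \<Longrightarrow> lie_generated br S \<subseteq> A"
  by (auto simp: lie_generated_def)

text \<open>By Jacobi, \<open>ad x\<close> is a derivation, so the elements it keeps inside the generated
  subalgebra form a subalgebra containing the generators.\<close>

lemma lie_generated_derivation_closed:
  assumes lb: "lie_bracket br" and gen: "\<And>z. z \<in> S \<Longrightarrow> br x z \<in> lie_generated br S"
    and z: "z \<in> lie_generated br S"
  shows "br x z \<in> lie_generated br S"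
proof -
  define s where "s = lie_generated br S"
  have bil: "bilinear br" using lb by (rule lie_bracket_bilinear)
  have s_sub: "subspace s" and s_br: "\<And>a b. a \<in> s \<Longrightarrow> b \<in> s \<Longrightarrow> br a b \<in> s"
    using lie_subalgebra_lie_generated by (auto simp: s_def lie_subalgebra_def)
  have "lie_subalgebra br {z \<in> s. br x z \<in> s}"
    unfolding lie_subalgebra_def subspace_def
    using s_sub s_br lie_bracket_derivation[OF lb, of x]
    by (auto simp: subspace_0 subspace_add subspace_scale bilinear_rzero[OF bil]
        bilinear_radd[OF bil] bilinear_rmul[OF bil])
  moreover have "S \<subseteq> {z \<in> s. br x z \<in> s}"
    using gen lie_generated_subset by (auto simp: s_def)
  ultimately have "s \<subseteq> {z \<in> s. br x z \<in> s}"
    unfolding s_def by (rule lie_generated_minimal)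
  with z show ?thesis by (auto simp: s_def)
qed

lemma ad_invariant_orthogonal_comp:
  assumes ai: "ad_invariant_inner br" and inv: "\<And>z. z \<in> S \<Longrightarrow> br x z \<in> S"
    and y: "y \<in> orthogonal_comp S"
  shows "br x y \<in> orthogonal_comp S"
proof -
  have "inner z (br x y) = 0" if "z \<in> S" for z
  proof -
    have "inner (br x z) y = 0"
      using orthogonal_comp_inner_eq_0[OF y inv[OF that]] .
    moreover have "inner (br x z) y = - inner z (br x y)"
      using ai by (simp add: ad_invariant_inner_def)
    ultimately show ?thesis by simp
  qed
  then show ?thesis by (simp add: orthogonal_comp_def orthogonal_def)
qed

lemma lie_ideal_orthogonal_comp:
  assumes ai: "ad_invariant_inner br" and I: "lie_ideal br I"
  shows "lie_ideal br (orthogonal_comp I)"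
  unfolding lie_ideal_def
proof (intro conjI allI ballI subspace_orthogonal_comp)
  fix x y assume "y \<in> orthogonal_comp I"
  moreover have "\<And>z. z \<in> I \<Longrightarrow> br x z \<in> I" using I by (simp add: lie_ideal_def)
  ultimately show "br x y \<in> orthogonal_comp I"
    using ad_invariant_orthogonal_comp[OF ai] by blast
qed

lemma lie_generated_orthogonal_comp_UNIV:
  fixes br :: "'g::euclidean_space \<Rightarrow> 'g \<Rightarrow> 'g"
  assumes lb: "lie_bracket br" and ai: "ad_invariant_inner br"
    and hs: "lie_subalgebra br h" and ae: "almost_effective_lie br h"
  shows "lie_generated br (orthogonal_comp h) = UNIV"
proof -
  define m where "m = orthogonal_comp h"
  define s where "s = lie_generated br m"
  have bil: "bilinear br" using lb by (rule lie_bracket_bilinear)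
  have h_sub: "subspace h" using hs by (simp add: lie_subalgebra_def)
  have s_sub: "subspace s" and s_br: "\<And>a b. a \<in> s \<Longrightarrow> b \<in> s \<Longrightarrow> br a b \<in> s"
    using lie_subalgebra_lie_generated by (auto simp: s_def lie_subalgebra_def)
  have ms: "m \<subseteq> s" unfolding s_def by (rule lie_generated_subset)
  have h_norm: "br x z \<in> s" if "x \<in> h" "z \<in> s" for x z
  proof -
    have "br x y \<in> m" if "y \<in> m" for y
      using ad_invariant_orthogonal_comp[OF ai _ that[unfolded m_def]] hs \<open>x \<in> h\<close>
      by (simp add: m_def lie_subalgebra_def)
    with ms show ?thesis
      using lie_generated_derivation_closed[OF lb, of m x z] \<open>z \<in> s\<close> by (auto simp: s_def)
  qed
  have "lie_ideal br s"
  proof -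
    have "br x z \<in> s" if "z \<in> s" for x z
    proof -
      obtain x1 x2 where "x1 \<in> h" "x2 \<in> m" "x = x1 + x2"
        using subspace_sum_orthogonal_comp[OF h_sub] unfolding m_def
        by (metis UNIV_I set_plus_elim)
      then show ?thesis
        using h_norm[of x1 z] s_br[of x2 z] ms that s_sub
        by (auto simp: bilinear_ladd[OF bil] subspace_add)
    qed
    with s_sub show ?thesis by (simp add: lie_ideal_def)
  qed
  then have "lie_ideal br (orthogonal_comp s)"
    by (rule lie_ideal_orthogonal_comp[OF ai])
  moreover have "orthogonal_comp s \<subseteq> h"
    using orthogonal_comp_anti_mono[OF ms] orthogonal_comp_self[OF h_sub]
    by (simp add: m_def)
  ultimately have "orthogonal_comp s = {0}"
    using ae by (simp add: almost_effective_lie_def)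
  then show ?thesis
    using orthogonal_comp_self[OF s_sub] by (simp add: s_def m_def)
qed

lemma toral_ad_vanishes_on_orthogonal_comp:
  fixes br :: "'g::euclidean_space \<Rightarrow> 'g \<Rightarrow> 'g"
  assumes lb: "lie_bracket br" and ai: "ad_invariant_inner br"
    and k_sub: "subspace k" and hk: "h \<subseteq> k" and tor: "toral br h k" and Y: "Y \<in> k"
    and vanish: "\<And>v. v \<in> orth_in (orthogonal_comp h) (k \<inter> orthogonal_comp h) \<Longrightarrow> br Y v = 0"
    and w: "w \<in> orthogonal_comp h"
  shows "br Y w = 0"
proof -
  define m where "m = orthogonal_comp h"
  have bil: "bilinear br" using lb by (rule lie_bracket_bilinear)
  have km_sub: "subspace (k \<inter> m)"
    unfolding m_def by (rule subspace_inter[OF k_sub subspace_orthogonal_comp])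
  obtain a b where a: "a \<in> span (k \<inter> m)" and b: "\<And>u. u \<in> span (k \<inter> m) \<Longrightarrow> orthogonal b u"
    and wab: "w = a + b"
    using orthogonal_subspace_decomp_exists[of "k \<inter> m" w] by blast
  have a': "a \<in> k \<inter> m" using a km_sub by (metis span_eq_iff)
  have "b = w - a" using wab by simp
  then have "b \<in> m"
    using subspace_diff[OF subspace_orthogonal_comp w, of a] a' by (simp add: m_def)
  moreover have "inner u b = 0" if "u \<in> k \<inter> m" for u
    using b[OF span_base[OF that]] by (simp add: orthogonal_def inner_commute)
  ultimately have "br Y b = 0"
    using vanish by (simp add: orth_in_def m_def)
  then have wa: "br Y w = br Y a" by (simp add: wab bilinear_radd[OF bil])
  have "br Y a \<in> h" using tor Y a' by (auto simp: toral_def)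
  moreover have "inner u (br Y a) = 0" if "u \<in> h" for u
  proof -
    have "br Y u \<in> h" using tor Y hk that by (auto simp: toral_def)
    then have "inner (br Y u) a = 0"
      using a' orthogonal_comp_inner_eq_0 unfolding m_def by blast
    moreover have "inner (br Y u) a = - inner u (br Y a)"
      using ai by (simp add: ad_invariant_inner_def)
    ultimately show ?thesis by simp
  qed
  ultimately have "br Y a = 0" using inner_eq_zero_iff by blast
  with wa show ?thesis by simp
qed

lemma toral_eq_0_if_ad_vanishes_on_complement:
  fixes br :: "'g::euclidean_space \<Rightarrow> 'g \<Rightarrow> 'g"
  assumes lb: "lie_bracket br" and ai: "ad_invariant_inner br" and ss: "semisimple_lie br"
    and hs: "lie_subalgebra br h" and ae: "almost_effective_lie br h"
    and k_sub: "subspace k" and hk: "h \<subseteq> k" and tor: "toral br h k" and Y: "Y \<in> k"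
    and vanish: "\<And>v. v \<in> orth_in (orthogonal_comp h) (k \<inter> orthogonal_comp h) \<Longrightarrow> br Y v = 0"
  shows "Y = 0"
proof (rule semisimple_lie_center_trivial[OF lb ss])
  have "orthogonal_comp h \<subseteq> {z. br Y z = 0}"
    using toral_ad_vanishes_on_orthogonal_comp[OF lb ai k_sub hk tor Y vanish] by blast
  then have "lie_generated br (orthogonal_comp h) \<subseteq> {z. br Y z = 0}"
    by (rule lie_generated_minimal[OF lie_subalgebra_centralizer[OF lb]])
  then show "br Y z = 0" for z
    using lie_generated_orthogonal_comp_UNIV[OF lb ai hs ae] by blast
qed

theorem mainTheorem8:
  fixes br :: "'g::euclidean_space \<Rightarrow> 'g \<Rightarrow> 'g"
    and h k :: "'g set" and AdH :: "('g \<Rightarrow> 'g) set"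
  assumes "lie_bracket br"
    and "ad_invariant_inner br"
    and "semisimple_lie br"
    and "lie_subalgebra br h"
    and "almost_effective_lie br h"
    and "adjoint_group br h AdH"
    and "H_subalgebra br h AdH k"
    and "toral br h k"
  shows "inj_on (\<lambda>X. restrict (br X) (orth_in (orth_in UNIV h) (k \<inter> orth_in UNIV h))) k"
proof (rule inj_onI)
  fix X X' assume X: "X \<in> k" and X': "X' \<in> k"
    and eq: "restrict (br X) (orth_in (orth_in UNIV h) (k \<inter> orth_in UNIV h)) =
             restrict (br X') (orth_in (orth_in UNIV h) (k \<inter> orth_in UNIV h))"
  have k_sub: "subspace k" and hk: "h \<subseteq> k"
    using assms(7) by (auto simp: H_subalgebra_def lie_subalgebra_def)
  have "X - X' = 0"
  proof (rule toral_eq_0_if_ad_vanishes_on_complement[OF assms(1-5) k_sub hk assms(8)])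
    show "X - X' \<in> k" using X X' k_sub by (simp add: subspace_diff)
    show "br (X - X') v = 0"
      if "v \<in> orth_in (orthogonal_comp h) (k \<inter> orthogonal_comp h)" for v
      using fun_cong[OF eq, of v] that
      by (simp add: orth_in_UNIV bilinear_lsub[OF lie_bracket_bilinear[OF assms(1)]])
  qed
  then show "X = X'" by simp
qed

end
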